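(* Let $G$ be a connected signed digraph. There exists a nilpotent degree-bounded finite dynamical system on $G$ if and only if $G$ is not a signed cycle.
   Context: A finite dynamical system (FDS) with $n$ components is a map $f=(f_1,\dots,f_n):X\to X$ where $X=X_1\times\cdots\times X_n$ and each $X_i$ is a nonempty finite interval of integers; $f^k$ denotes the $k$-fold composition. $f$ is nilpotent if $f^k$ is a constant map for some positive integer $k$. A signed digraph is a pair $G=(V,E)$ with $E\subseteq V\times V\times\{+,-\}$; $(j,i,s)\in E$ is an arc from $j$ to $i$ of sign $s$ (loops allowed; $G$ may have both a positive and a negative arc from $j$ to $i$, called parallel arcs). Write $G^+_i=\{j:(j,i,+)\in E\}$, $G^-_i=\{j:(j,i,-)\in E\}$, $G_i=G^+_i\cup G^-_i$. The in-degree is $d^{\mathrm{in}}_G(i)=|G^+_i|+|G^-_i|$ and the out-degree $d^{\mathrm{out}}_G(i)$ is the number of positive arcs leaving $i$ plus the number of negative arcs leaving $i$. $G$ is connected if its underlying undirected graph is connected. The underlying unsigned digraph $|G|$ has vertex set $V$ and an arc from $j$ to $i$ iff $j\in G_i$. $G$ is a signed cycle if $|G|$ is a directed cycle (through all vertices, each exactly once; a single vertex with a loop counts) and $G$ has no parallel arcs. The interaction graph of an FDS $f$ is the signed digraph on $\{1,\dots,n\}$ with a positive (resp. negative) arc from $j$ to $i$ iff there is $x\in X$ with $x_j<\max(X_j)$ such that $f_i(x+e_j)-f_i(x)$ is positive (resp. negative), $e_j$ the $j$-th unit vector. $f$ is an FDS on $G$ if $G$ is its interaction graph. $f$ is degree-bounded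 if, with $G$ its interaction graph, for every $i$: $|X_i|=2$ if $d^{\mathrm{out}}_G(i)=0<d^{\mathrm{in}}_G(i)$, and $|X_i|\le d^{\mathrm{out}}_G(i)+1$ otherwise. *)

theory Defs
  imports Main
begin

datatype sign = Pos | Neg

text \<open>A signed digraph on the vertex set {0..<n} is given by its arc set
  E :: (nat \<times> nat \<times> sign) set; (j,i,s) \<in> E is an arc from j to i of sign s.\<close>

definition signed_digraph :: "nat \<Rightarrow> (nat \<times> nat \<times> sign) set \<Rightarrow> bool" where
  "signed_digraph n E \<longleftrightarrow> (\<forall>(j,i,s)\<in>E. j < n \<and> i < n)"

definition in_pos :: "(nat \<times> nat \<times> sign) set \<Rightarrow> nat \<Rightarrow> nat set" where
  "in_pos E i = {j. (j,i,Pos) \<in> E}"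

definition in_neg :: "(nat \<times> nat \<times> sign) set \<Rightarrow> nat \<Rightarrow> nat set" where
  "in_neg E i = {j. (j,i,Neg) \<in> E}"

definition in_degree :: "(nat \<times> nat \<times> sign) set \<Rightarrow> nat \<Rightarrow> nat" where
  "in_degree E i = card (in_pos E i) + card (in_neg E i)"

definition out_degree :: "(nat \<times> nat \<times> sign) set \<Rightarrow> nat \<Rightarrow> nat" where
  "out_degree E j = card {i. (j,i,Pos) \<in> E} + card {i. (j,i,Neg) \<in> E}"

definition arcs :: "(nat \<times> nat \<times> sign) set \<Rightarrow> (nat \<times> nat) set" where
  "arcs E = {(j,i). \<exists>s. (j,i,s) \<in> E}"

definition connected_sd :: "nat \<Rightarrow> (nat \<times> nat \<times> sign) set \<Rightarrow> bool" where
  "connected_sd n E \<longleftrightarrow> (\<forall>u<n. \<forall>v<n. (u,v) \<in> (arcs E \<union> (arcs E)\<inverse>)\<^sup>*)"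

definition signed_cycle :: "nat \<Rightarrow> (nat \<times> nat \<times> sign) set \<Rightarrow> bool" where
  "signed_cycle n E \<longleftrightarrow>
     (\<exists>p. bij_betw p {..<n} {..<n} \<and>
          arcs E = {(p k, p (Suc k mod n)) | k. k < n}) \<and>
     \<not> (\<exists>j i. (j,i,Pos) \<in> E \<and> (j,i,Neg) \<in> E)"

definition states :: "nat \<Rightarrow> (nat \<Rightarrow> int) \<Rightarrow> (nat \<Rightarrow> int) \<Rightarrow> (nat \<Rightarrow> int) set" where
  "states n lo hi = {x. (\<forall>i<n. lo i \<le> x i \<and> x i \<le> hi i) \<and> (\<forall>i\<ge>n. x i = 0)}"

definition is_FDS :: "nat \<Rightarrow> (nat \<Rightarrow> int) \<Rightarrow> (nat \<Rightarrow> int) \<Rightarrow> ((nat \<Rightarrow> int) \<Rightarrow> (nat \<Rightarrow> int)) \<Rightarrow> bool" where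
  "is_FDS n lo hi f \<longleftrightarrow> (\<forall>i<n. lo i \<le> hi i) \<and> (\<forall>x\<in>states n lo hi. f x \<in> states n lo hi)"

definition sign_of :: "int \<Rightarrow> sign option" where
  "sign_of d = (if d > 0 then Some Pos else if d < 0 then Some Neg else None)"

definition interaction_graph :: "nat \<Rightarrow> (nat \<Rightarrow> int) \<Rightarrow> (nat \<Rightarrow> int) \<Rightarrow> ((nat \<Rightarrow> int) \<Rightarrow> (nat \<Rightarrow> int)) \<Rightarrow> (nat \<times> nat \<times> sign) set" where
  "interaction_graph n lo hi f =
     {(j,i,s). j < n \<and> i < n \<and>
        (\<exists>x\<in>states n lo hi. x j < hi j \<and> sign_of (f (x(j := x j + 1)) i - f x i) = Some s)}"

definition nilpotent :: "nat \<Rightarrow> (nat \<Rightarrow> int) \<Rightarrow> (nat \<Rightarrow> int) \<Rightarrow> ((nat \<Rightarrow> int) \<Rightarrow> (nat \<Rightarrow> int)) \<Rightarrow> bool" where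
  "nilpotent n lo hi f \<longleftrightarrow> (\<exists>k>0. \<exists>c. \<forall>x\<in>states n lo hi. (f ^^ k) x = c)"

definition degree_bounded :: "nat \<Rightarrow> (nat \<Rightarrow> int) \<Rightarrow> (nat \<Rightarrow> int) \<Rightarrow> ((nat \<Rightarrow> int) \<Rightarrow> (nat \<Rightarrow> int)) \<Rightarrow> bool" where
  "degree_bounded n lo hi f \<longleftrightarrow>
     (let G = interaction_graph n lo hi f in
      \<forall>i<n. (if out_degree G i = 0 \<and> 0 < in_degree G i
             then card {lo i..hi i} = 2
             else card {lo i..hi i} \<le> out_degree G i + 1))"

end

(* If G is a signed cycle, every vertex is the only in-neighbour of its successor and
   degree-boundedness leaves two values per vertex, so every FDS on G is injective and thus
   not nilpotent.

   Otherwise choose an out-neighbour lam u of every vertex u. Call v a root if it has no in-arc,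
   parallel in-arcs, or an in-arc from some u with lam u \<noteq> v. A choice minimising the number of
   vertices unreachable from roots reaches all of them: lam permutes the unreachable vertices,
   redirecting lam at one of them to another out-neighbour makes a vertex of its lam-cycle a
   root, and if that is impossible, connectivity forces G to be a signed cycle.
   Each arc from u gets a threshold in {1..out-degree}, those not to lam u above the largest
   value u takes after one step, and each vertex is an AND or OR gate of the literals on its
   in-arcs. Then roots are constant from the second step on, and every other vertex copies its
   parent in a breadth-first tree rooted at the roots, so the system is nilpotent. *)

theory Submission
  imports Defs "HOL-Combinatorics.Orbits"
begin

lemma arcs_iff: "(j, i) \<in> arcs E \<longleftrightarrow> (\<exists>s. (j, i, s) \<in> E)"
  by (simp add: arcs_def)

lemma signed_digraph_arcD: "signed_digraph n E \<Longrightarrow> (j, i, s) \<in> E \<Longrightarrow> j < n \<and> i < n"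
  unfolding signed_digraph_def by blast

lemma states_fun_upd:
  "x \<in> states n lo hi \<Longrightarrow> j < n \<Longrightarrow> lo j \<le> v \<Longrightarrow> v \<le> hi j \<Longrightarrow> x(j := v) \<in> states n lo hi"
  unfolding states_def by auto

lemma sign_of_eq_None: "sign_of d = None \<longleftrightarrow> d = 0"
  by (simp add: sign_of_def)

section \<open>Reading the interaction graph\<close>

lemma interaction_graph_no_arc_fun_upd:
  assumes no_arc: "\<And>s. (j, i, s) \<notin> interaction_graph n lo hi f"
    and i: "i < n" and j: "j < n" and x: "x \<in> states n lo hi"
    and v: "lo j \<le> v" "v \<le> hi j"
  shows "f (x(j := v)) i = f x i"
proof -
  have unit_step: "f (x(j := w + 1)) i = f (x(j := w)) i" if w: "lo j \<le> w" "w < hi j" for w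
  proof -
    let ?y = "x(j := w)"
    have "?y \<in> states n lo hi" using x j w by (intro states_fun_upd) auto
    moreover have "?y j < hi j" using w by simp
    ultimately have "sign_of (f (?y(j := ?y j + 1)) i - f ?y i) \<noteq> Some s" for s
      using no_arc[of s] i j unfolding interaction_graph_def by blast
    then have "sign_of (f (?y(j := ?y j + 1)) i - f ?y i) = None" by (meson not_Some_eq)
    then show ?thesis by (simp add: sign_of_eq_None)
  qed
  have from_lo: "w \<le> hi j \<longrightarrow> f (x(j := w)) i = f (x(j := lo j)) i" if "lo j \<le> w" for w
    using that
  proof (induction w rule: int_ge_induct)
    case (step w)
    show ?case
    proof
      assume "w + 1 \<le> hi j"
      then have "f (x(j := w + 1)) i = f (x(j := w)) i" using step.hyps by (intro unit_step) auto
      with step.IH \<open>w + 1 \<le> hi j\<close> show "f (x(j := w + 1)) i = f (x(j := lo j)) i"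
        by (simp add: fun_upd_def)
    qed
  qed simp
  have "x j \<in> {lo j..hi j}" using x j unfolding states_def by auto
  then have "f x i = f (x(j := lo j)) i" using from_lo[of "x j"] by simp
  with from_lo[OF v(1)] v(2) show ?thesis by simp
qed

lemma interaction_graph_unique_in_neighbour:
  assumes only_a: "\<And>j s. (j, i, s) \<in> interaction_graph n lo hi f \<Longrightarrow> j = a"
    and i: "i < n" and x: "x \<in> states n lo hi" and y: "y \<in> states n lo hi" and xy: "x a = y a"
  shows "f x i = f y i"
proof -
  define z where "z m = (\<lambda>k. if k < m then y k else x k)" for m
  have "z m \<in> states n lo hi \<and> f (z m) i = f x i" for m
  proof (induction m)
    case 0
    then show ?case using x by (simp add: z_def)
  next
    case (Suc m)
    have z_Suc: "z (Suc m) = (z m)(m := y m)" by (auto simp: z_def)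
    show ?case
    proof (cases "m = a \<or> n \<le> m")
      case True
      then have "z (Suc m) = z m" using z_Suc xy x y unfolding z_def states_def by auto
      then show ?thesis using Suc by simp
    next
      case False
      then have m: "m < n" "m \<noteq> a" by auto
      have y_m: "lo m \<le> y m" "y m \<le> hi m" using y m unfolding states_def by auto
      have "(z m)(m := y m) \<in> states n lo hi" using Suc m y_m by (intro states_fun_upd) auto
      moreover have "f ((z m)(m := y m)) i = f (z m) i"
        using only_a m i Suc y_m by (intro interaction_graph_no_arc_fun_upd) auto
      ultimately show ?thesis using Suc z_Suc by metis
    qed
  qed
  moreover have "z n = y" using x y unfolding z_def states_def by auto
  ultimately show ?thesis by metis
qed

section \<open>Signed cycles admit no nilpotent degree-bounded system\<close>

lemma signed_cycle_successor:
  assumes cyc: "signed_cycle n E" and i: "i < n"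
  obtains w where "w < n" "\<exists>s. (i, w, s) \<in> E" "\<And>w' s. (i, w', s) \<in> E \<Longrightarrow> w' = w"
    "\<And>j s. (j, w, s) \<in> E \<Longrightarrow> j = i"
proof -
  obtain p where bij: "bij_betw p {..<n} {..<n}"
    and arcs_eq: "arcs E = {(p k, p (Suc k mod n)) | k. k < n}"
    using cyc unfolding signed_cycle_def by blast
  have inj: "inj_on p {..<n}" and img: "p ` {..<n} = {..<n}"
    using bij by (auto simp: bij_betw_def)
  obtain k where k: "k < n" "i = p k" using i img by (metis imageE lessThan_iff)
  have succ_inj: "k' = k" if "k' < n" "Suc k' mod n = Suc k mod n" for k'
    using that k(1) by (simp add: mod_Suc split: if_splits)
  show thesis
  proof
    have "Suc k mod n < n" using k(1) by simp
    then show "p (Suc k mod n) < n" using img by blast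
    have "(p k, p (Suc k mod n)) \<in> arcs E" using arcs_eq k(1) by blast
    then show "\<exists>s. (i, p (Suc k mod n), s) \<in> E" using k(2) arcs_iff by blast
    show "w' = p (Suc k mod n)" if "(i, w', s) \<in> E" for w' s
    proof -
      have "(i, w') \<in> arcs E" using that by (auto simp: arcs_iff)
      then obtain k' where k': "k' < n" "i = p k'" "w' = p (Suc k' mod n)"
        unfolding arcs_eq by blast
      have "k' = k" by (rule inj_onD[OF inj]) (use k k' in auto)
      with k' show ?thesis by simp
    qed
    show "j = i" if "(j, p (Suc k mod n), s) \<in> E" for j s
    proof -
      have "(j, p (Suc k mod n)) \<in> arcs E" using that by (auto simp: arcs_iff)
      then obtain k' where k': "k' < n" "j = p k'" "p (Suc k mod n) = p (Suc k' mod n)"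
        unfolding arcs_eq by blast
      have "Suc k' mod n = Suc k mod n"
        by (rule inj_onD[OF inj k'(3)[symmetric]]) (use k(1) in auto)
      then have "k' = k" using succ_inj k'(1) by blast
      with k k' show ?thesis by simp
    qed
  qed
qed

lemma signed_cycle_degree_bounded_two_values:
  assumes cyc: "signed_cycle n E" and i: "i < n"
    and IG: "interaction_graph n lo hi f = E" and db: "degree_bounded n lo hi f"
  shows "hi i = lo i + 1"
proof -
  obtain w s where arc: "(i, w, s) \<in> E" and succ: "\<And>w' s. (i, w', s) \<in> E \<Longrightarrow> w' = w"
    using signed_cycle_successor[OF cyc i] by metis
  have no_parallel: "(i, w, Pos) \<notin> E \<or> (i, w, Neg) \<notin> E"
    using cyc unfolding signed_cycle_def by blast
  have one: "{w'. (i, w', s) \<in> E} = {w}" using arc succ by blast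
  have none: "{w'. (i, w', s') \<in> E} = {}" if "s' \<noteq> s" for s'
    using succ no_parallel arc that by (cases s; cases s') blast+
  have "out_degree E i = 1"
    using one none[of Pos] none[of Neg] unfolding out_degree_def by (cases s) auto
  then have "card {lo i..hi i} \<le> 2"
    using db i unfolding degree_bounded_def Let_def IG by auto
  moreover obtain x where "x \<in> states n lo hi" "x i < hi i"
    using arc unfolding IG[symmetric] interaction_graph_def by blast
  then have "lo i < hi i" using i unfolding states_def by force
  ultimately show ?thesis by simp
qed

text \<open>Each vertex of a signed cycle is the only in-neighbour of its successor, and on a
  two-element domain the successor must see every change of it: so the system is injective.\<close>

lemma signed_cycle_inj_on_states:
  assumes cyc: "signed_cycle n E"
    and IG: "interaction_graph n lo hi f = E" and db: "degree_bounded n lo hi f"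
  shows "inj_on f (states n lo hi)"
proof (rule inj_onI, rule ext)
  fix x y i assume x: "x \<in> states n lo hi" and y: "y \<in> states n lo hi" and fxy: "f x = f y"
  show "x i = y i"
  proof (cases "i < n")
    case False
    then show ?thesis using x y unfolding states_def by auto
  next
    case i: True
    have two: "hi i = lo i + 1" by (rule signed_cycle_degree_bounded_two_values[OF cyc i IG db])
    obtain w s where "w < n" and arc: "(i, w, s) \<in> E" and only_i: "\<And>j s. (j, w, s) \<in> E \<Longrightarrow> j = i"
      using signed_cycle_successor[OF cyc i] by metis
    obtain z where z: "z \<in> states n lo hi" "z i < hi i"
      and change: "sign_of (f (z(i := z i + 1)) w - f z w) = Some s"
      using arc unfolding IG[symmetric] interaction_graph_def by blast
    have z_lo: "z i = lo i" using z i two unfolding states_def by force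
    have z'_states: "z(i := lo i + 1) \<in> states n lo hi" using z i two by (intro states_fun_upd) auto
    have determined: "f u w = f u' w" if "u \<in> states n lo hi" "u' \<in> states n lo hi" "u i = u' i" for u u'
      using interaction_graph_unique_in_neighbour[of w n lo hi f i] only_i that \<open>w < n\<close>
      unfolding IG by blast
    have x_y_range: "x i \<in> {lo i, lo i + 1}" "y i \<in> {lo i, lo i + 1}"
      using x y i two unfolding states_def by force+
    have "f z w \<noteq> f (z(i := lo i + 1)) w" using change z_lo by (auto simp: sign_of_def)
    then show ?thesis
      using x_y_range determined[OF x z(1)] determined[OF x z'_states] determined[OF y z(1)]
        determined[OF y z'_states] fxy z_lo by auto
  qed
qed

lemma inj_on_not_nilpotent:
  assumes fds: "is_FDS n lo hi f" and inj: "inj_on f (states n lo hi)"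
    and "x \<in> states n lo hi" "y \<in> states n lo hi" "x \<noteq> y"
  shows "\<not> nilpotent n lo hi f"
proof -
  have "inj_on (f ^^ k) (states n lo hi)" for k
  proof (induction k)
    case (Suc k)
    have "f ` states n lo hi \<subseteq> states n lo hi" using fds unfolding is_FDS_def by blast
    with Suc have "inj_on (f ^^ k) (f ` states n lo hi)" by (rule inj_on_subset)
    with inj show ?case by (simp only: funpow_Suc_right comp_inj_on)
  qed simp
  with assms(3-5) show ?thesis unfolding nilpotent_def by (metis inj_onD)
qed

theorem signed_cycle_not_nilpotent:
  assumes n: "0 < n" and cyc: "signed_cycle n E" and fds: "is_FDS n lo hi f"
    and IG: "interaction_graph n lo hi f = E" and db: "degree_bounded n lo hi f"
  shows "\<not> nilpotent n lo hi f"
proof -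
  have two: "hi i = lo i + 1" if "i < n" for i
    using signed_cycle_degree_bounded_two_values[OF cyc that IG db] .
  define x where "x = (\<lambda>j. if j < n then lo j else 0)"
  have x: "x \<in> states n lo hi" using two unfolding x_def states_def by fastforce
  have "x(0 := lo 0 + 1) \<in> states n lo hi" using x two n by (intro states_fun_upd) (auto simp: x_def)
  moreover have "x \<noteq> x(0 := lo 0 + 1)" using n by (auto simp: x_def fun_eq_iff)
  ultimately show ?thesis
    using inj_on_not_nilpotent[OF fds signed_cycle_inj_on_states[OF cyc IG db] x] by blast
qed

section \<open>Choosing one out-neighbour per vertex\<close>

definition parallel_arcs :: "(nat \<times> nat \<times> sign) set \<Rightarrow> nat \<Rightarrow> nat \<Rightarrow> bool" where
  "parallel_arcs E u v \<longleftrightarrow> (u, v, Pos) \<in> E \<and> (u, v, Neg) \<in> E"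

definition out_choice :: "nat \<Rightarrow> (nat \<times> nat \<times> sign) set \<Rightarrow> (nat \<Rightarrow> nat) \<Rightarrow> bool" where
  "out_choice n E lam \<longleftrightarrow> (\<forall>u<n. (\<exists>v s. (u, v, s) \<in> E) \<longrightarrow> (\<exists>s. (u, lam u, s) \<in> E))"

definition choice_root :: "(nat \<times> nat \<times> sign) set \<Rightarrow> (nat \<Rightarrow> nat) \<Rightarrow> nat \<Rightarrow> bool" where
  "choice_root E lam v \<longleftrightarrow>
     (\<forall>u s. (u, v, s) \<notin> E) \<or> (\<exists>u. parallel_arcs E u v) \<or> (\<exists>u s. (u, v, s) \<in> E \<and> lam u \<noteq> v)"

primrec layer :: "nat \<Rightarrow> (nat \<times> nat \<times> sign) set \<Rightarrow> (nat \<Rightarrow> nat) \<Rightarrow> nat \<Rightarrow> nat set" where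
  "layer n E lam 0 = {v. v < n \<and> choice_root E lam v}"
| "layer n E lam (Suc k) = layer n E lam k \<union> {v. \<exists>u\<in>layer n E lam k. (u, v) \<in> arcs E}"

definition reached :: "nat \<Rightarrow> (nat \<times> nat \<times> sign) set \<Rightarrow> (nat \<Rightarrow> nat) \<Rightarrow> nat \<Rightarrow> bool" where
  "reached n E lam v \<longleftrightarrow> (\<exists>k. v \<in> layer n E lam k)"

definition unreached :: "nat \<Rightarrow> (nat \<times> nat \<times> sign) set \<Rightarrow> (nat \<Rightarrow> nat) \<Rightarrow> nat set" where
  "unreached n E lam = {v. v < n \<and> \<not> reached n E lam v}"

lemma choice_root_reached: "v < n \<Longrightarrow> choice_root E lam v \<Longrightarrow> reached n E lam v"
  unfolding reached_def by (intro exI[of _ 0]) simp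

lemma reached_arc: "reached n E lam u \<Longrightarrow> (u, v) \<in> arcs E \<Longrightarrow> reached n E lam v"
  unfolding reached_def by (metis (mono_tags, lifting) layer.simps(2) UnI2 mem_Collect_eq)

lemma reached_rtrancl: "(u, v) \<in> (arcs E)\<^sup>* \<Longrightarrow> reached n E lam u \<Longrightarrow> reached n E lam v"
  by (induction rule: rtrancl_induct) (auto intro: reached_arc)

lemma reached_if_roots_reached:
  assumes roots: "\<And>w. w < n \<Longrightarrow> choice_root E lam w \<Longrightarrow> reached n E lam' w"
    and "reached n E lam v"
  shows "reached n E lam' v"
proof -
  obtain k where "v \<in> layer n E lam k" using assms(2) unfolding reached_def by blast
  then show ?thesis
    by (induction k arbitrary: v) (auto intro: roots reached_arc)
qed

lemma finite_unreached: "finite (unreached n E lam)"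
  unfolding unreached_def by simp

lemma unreached_in_arc:
  assumes sd: "signed_digraph n E" and v: "v \<in> unreached n E lam" and arc: "(u, v, s) \<in> E"
  shows "u \<in> unreached n E lam \<and> lam u = v"
proof -
  have "\<not> choice_root E lam v" using v choice_root_reached unfolding unreached_def by blast
  then have "lam u = v" using arc unfolding choice_root_def by blast
  moreover have "\<not> reached n E lam u"
    using v reached_arc[of n E lam u v] arc unfolding unreached_def arcs_iff by blast
  ultimately show ?thesis using signed_digraph_arcD[OF sd arc] unfolding unreached_def by blast
qed

lemma unreached_not_parallel: "v \<in> unreached n E lam \<Longrightarrow> \<not> parallel_arcs E u v"
  using choice_root_reached unfolding unreached_def choice_root_def by blast

lemma unreached_has_in_arc: "v \<in> unreached n E lam \<Longrightarrow> \<exists>u s. (u, v, s) \<in> E"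
  using choice_root_reached unfolding unreached_def choice_root_def by blast

text \<open>Each unreached vertex is chosen by all its in-neighbours, which are unreached as well;
  by counting, the choice function therefore permutes the unreached vertices.\<close>

lemma bij_betw_unreached:
  assumes sd: "signed_digraph n E"
  shows "bij_betw lam (unreached n E lam) (unreached n E lam)"
proof -
  let ?U = "unreached n E lam"
  have sub: "?U \<subseteq> lam ` ?U"
  proof
    fix v assume v: "v \<in> ?U"
    then obtain u s where "(u, v, s) \<in> E" using unreached_has_in_arc by blast
    with unreached_in_arc[OF sd v] show "v \<in> lam ` ?U" by blast
  qed
  have "lam ` ?U = ?U"
    using card_seteq[OF finite_imageI[OF finite_unreached] sub card_image_le[OF finite_unreached]]
    by simp
  moreover from this have "inj_on lam ?U" by (simp add: eq_card_imp_inj_on finite_unreached)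
  ultimately show ?thesis by (simp add: bij_betw_def)
qed

lemma unreached_choice_arc:
  assumes sd: "signed_digraph n E" and u: "u \<in> unreached n E lam"
  shows "(u, lam u) \<in> arcs E"
proof -
  have bij: "bij_betw lam (unreached n E lam) (unreached n E lam)" by (rule bij_betw_unreached[OF sd])
  then have "lam u \<in> unreached n E lam" using u by (auto simp: bij_betw_def)
  then obtain w s where arc: "(w, lam u, s) \<in> E" using unreached_has_in_arc by blast
  with unreached_in_arc[OF sd] \<open>lam u \<in> _\<close> have "w \<in> unreached n E lam" "lam w = lam u" by blast+
  then have "w = u" using bij u by (auto simp: bij_betw_def dest: inj_onD)
  with arc show ?thesis by (auto simp: arcs_iff)
qed

lemma self_in_orbit_if_bij_betw:
  assumes "finite A" "bij_betw f A A" "x \<in> A"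
  shows "x \<in> orbit f x"
proof -
  define g where "g y = (if y \<in> A then f y else y)" for y
  have "bij_betw g A A"
    using assms(2) by (rule bij_betw_cong[THEN iffD1, rotated]) (simp add: g_def)
  then have "g permutes A" by (rule bij_imp_permutes) (simp add: g_def)
  then have "x \<in> orbit g x"
    using assms(1) by (intro permutation_self_in_orbit) (auto simp: permutation_permutes)
  moreover have "orbit g x = orbit f x"
    using assms by (intro orbit_cong0) (auto simp: g_def bij_betw_def)
  ultimately show ?thesis by simp
qed

lemma orbit_trancl:
  assumes "f ` A \<subseteq> A" "\<And>z. z \<in> A \<Longrightarrow> (z, f z) \<in> R" "x \<in> A" "y \<in> orbit f x"
  shows "(x, y) \<in> R\<^sup>+"
proof -
  from assms(4) have "y \<in> A \<and> (x, y) \<in> R\<^sup>+"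
    by induction (use assms(1-3) in \<open>auto intro: trancl_into_trancl\<close>)
  then show ?thesis ..
qed

lemma unreached_orbit:
  assumes sd: "signed_digraph n E" and u: "u \<in> unreached n E lam"
  shows "u \<in> orbit lam u" and "orbit lam u \<subseteq> unreached n E lam"
proof -
  have bij: "bij_betw lam (unreached n E lam) (unreached n E lam)" by (rule bij_betw_unreached[OF sd])
  show "u \<in> orbit lam u" by (rule self_in_orbit_if_bij_betw[OF finite_unreached bij u])
  show "orbit lam u \<subseteq> unreached n E lam"
  proof
    fix y assume "y \<in> orbit lam u"
    then show "y \<in> unreached n E lam"
      by induction (use bij u in \<open>auto simp: bij_betw_def\<close>)
  qed
qed

lemma unreached_choice_path:
  assumes sd: "signed_digraph n E" and u: "u \<in> unreached n E lam"
  shows "(lam u, u) \<in> (arcs E)\<^sup>*"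
proof -
  have bij: "bij_betw lam (unreached n E lam) (unreached n E lam)" by (rule bij_betw_unreached[OF sd])
  have "u \<in> orbit lam (lam u)" using unreached_orbit(1)[OF sd u] self_in_orbit_step by metis
  moreover have "lam u \<in> unreached n E lam" using bij u by (auto simp: bij_betw_def)
  ultimately have "(lam u, u) \<in> (arcs E)\<^sup>+"
    using bij unreached_choice_arc[OF sd] by (intro orbit_trancl) (auto simp: bij_betw_def)
  then show ?thesis by simp
qed

text \<open>Redirecting the choice of an unreached vertex u makes lam u a root, and lam u reaches u.\<close>

lemma redirect_choice_shrinks_unreached:
  assumes sd: "signed_digraph n E" and oc: "out_choice n E lam"
    and u: "u \<in> unreached n E lam" and ux: "(u, x) \<in> arcs E" and x: "x \<noteq> lam u"
  shows "unreached n E (lam(u := x)) \<subset> unreached n E lam"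
proof -
  let ?lam' = "lam(u := x)"
  have "u < n" using u unfolding unreached_def by simp
  then obtain s where arc: "(u, lam u, s) \<in> E"
    using oc ux unfolding out_choice_def arcs_iff by blast
  then have "choice_root E ?lam' (lam u)" using x unfolding choice_root_def by auto
  then have "reached n E ?lam' (lam u)"
    using signed_digraph_arcD[OF sd arc] by (blast intro: choice_root_reached)
  then have reached_x: "reached n E ?lam' x"
    using reached_rtrancl[OF unreached_choice_path[OF sd u]] reached_arc ux by blast
  have "reached n E ?lam' w" if "w < n" "choice_root E lam w" for w
  proof (cases "choice_root E ?lam' w")
    case True
    show ?thesis by (rule choice_root_reached[OF that(1) True])
  next
    case False
    then have "w = x" using that(2) unfolding choice_root_def by (auto split: if_splits)
    then show ?thesis using reached_x by simp
  qed
  then have "unreached n E ?lam' \<subseteq> unreached n E lam"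
    using reached_if_roots_reached unfolding unreached_def by blast
  moreover have "lam u \<in> unreached n E lam"
    using bij_betw_unreached[OF sd] u by (auto simp: bij_betw_def)
  moreover have "lam u \<notin> unreached n E ?lam'"
    using \<open>reached n E ?lam' (lam u)\<close> unfolding unreached_def by blast
  ultimately show ?thesis by blast
qed

lemma connected_sd_closed:
  assumes conn: "connected_sd n E" and a: "a < n" "a \<in> S"
    and out_closed: "\<And>y z. y \<in> S \<Longrightarrow> (y, z) \<in> arcs E \<Longrightarrow> z \<in> S"
    and in_closed: "\<And>y z. y \<in> S \<Longrightarrow> (z, y) \<in> arcs E \<Longrightarrow> z \<in> S"
    and v: "v < n"
  shows "v \<in> S"
proof -
  have "(a, v) \<in> (arcs E \<union> (arcs E)\<inverse>)\<^sup>*" using conn a v unfolding connected_sd_def by blast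
  then show ?thesis by induction (use a out_closed in_closed in blast)+
qed

lemma signed_cycle_if_orbit:
  assumes self: "u0 \<in> orbit f u0" and orbit: "orbit f u0 = {..<n}"
    and arcs_eq: "arcs E = {(u, f u) | u. u < n}" and no_parallel: "\<And>j i. \<not> parallel_arcs E j i"
  shows "signed_cycle n E"
proof -
  define p where "p k = (f ^^ k) u0" for k
  define q where "q = funpow_dist1 f u0 u0"
  have inj: "inj_on p {0..<q}" unfolding p_def q_def by (rule inj_on_funpow_dist1[OF self])
  have img: "p ` {0..<q} = {..<n}"
    unfolding p_def q_def using orbit_conv_funpow_dist1[OF self] orbit by simp
  have "q = n" using card_image[OF inj] img by simp
  then have bij: "bij_betw p {..<n} {..<n}" using inj img by (simp add: bij_betw_def atLeast0LessThan)
  have "(f ^^ q) u0 = u0" unfolding q_def by (rule funpow_dist1_prop[OF self])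
  then have period: "(f ^^ n) u0 = u0" using \<open>q = n\<close> by simp
  have succ: "p (Suc k mod n) = f (p k)" for k
    using funpow_mod_eq[OF period, of "Suc k"] by (simp add: p_def)
  have "arcs E = {(p k, p (Suc k mod n)) | k. k < n}"
  proof -
    have "u \<in> p ` {..<n}" if "u < n" for u using that bij by (simp add: bij_betw_def)
    moreover have "p k < n" if "k < n" for k using that bij by (auto simp: bij_betw_def)
    ultimately show ?thesis unfolding arcs_eq succ by blast
  qed
  with bij no_parallel show ?thesis unfolding signed_cycle_def parallel_arcs_def by blast
qed

text \<open>If no unreached vertex has an alternative out-neighbour, the unreached vertices form lam-cycles
  closed under all arcs, so by connectivity G is a single signed cycle.\<close>

lemma closed_unreached_signed_cycle:
  assumes sd: "signed_digraph n E" and conn: "connected_sd n E"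
    and u0: "u0 \<in> unreached n E lam"
    and closed: "\<And>u x. u \<in> unreached n E lam \<Longrightarrow> (u, x) \<in> arcs E \<Longrightarrow> x = lam u"
  shows "signed_cycle n E"
proof -
  let ?U = "unreached n E lam" and ?O = "orbit lam u0"
  have self: "u0 \<in> ?O" and O_U: "?O \<subseteq> ?U" using unreached_orbit[OF sd u0] by auto
  have "v \<in> ?O" if "v < n" for v
  proof (rule connected_sd_closed[OF conn _ self _ _ that])
    show "u0 < n" using u0 unfolding unreached_def by simp
    show "z \<in> ?O" if "y \<in> ?O" "(y, z) \<in> arcs E" for y z
      using that O_U closed by (metis orbit.step subsetD)
    show "z \<in> ?O" if y: "y \<in> ?O" and arc: "(z, y) \<in> arcs E" for y z
    proof -
      obtain s where "(z, y, s) \<in> E" using arc arcs_iff by blast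
      then have z: "z \<in> ?U" "lam z = y" using unreached_in_arc[OF sd] y O_U by blast+
      have "z \<in> orbit lam (lam z)" using unreached_orbit(1)[OF sd z(1)] self_in_orbit_step by metis
      with z(2) y show ?thesis by (blast intro: orbit_trans)
    qed
  qed
  then have O_eq: "?O = {..<n}" and U_eq: "?U = {..<n}" using O_U unfolding unreached_def by auto
  have "arcs E = {(u, lam u) | u. u < n}"
  proof (intro set_eqI iffI)
    fix e assume "e \<in> arcs E"
    then obtain a b s where e: "e = (a, b)" "(a, b) \<in> arcs E" "(a, b, s) \<in> E"
      by (cases e) (auto simp: arcs_iff)
    then have "a < n" using signed_digraph_arcD[OF sd] by blast
    then have "b = lam a" using closed e(2) U_eq by blast
    with e(1) \<open>a < n\<close> show "e \<in> {(u, lam u) | u. u < n}" by blast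
  next
    fix e assume "e \<in> {(u, lam u) | u. u < n}"
    then show "e \<in> arcs E" using unreached_choice_arc[OF sd] U_eq by blast
  qed
  moreover have "\<not> parallel_arcs E j i" for j i
    using unreached_not_parallel U_eq signed_digraph_arcD[OF sd] unfolding parallel_arcs_def
    by (metis lessThan_iff)
  ultimately show ?thesis using signed_cycle_if_orbit[OF self O_eq] by blast
qed

lemma exists_choice_reaching_all:
  assumes sd: "signed_digraph n E" and conn: "connected_sd n E" and not_cycle: "\<not> signed_cycle n E"
  obtains lam where "out_choice n E lam" "\<And>v. v < n \<Longrightarrow> reached n E lam v"
proof -
  have init: "out_choice n E (\<lambda>u. SOME v. \<exists>s. (u, v, s) \<in> E)"
    unfolding out_choice_def
  proof (intro allI impI)
    fix u assume "\<exists>v s. (u, v, s) \<in> E"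
    then show "\<exists>s. (u, SOME v. \<exists>s. (u, v, s) \<in> E, s) \<in> E" by (rule someI_ex)
  qed
  then obtain lam where oc: "out_choice n E lam"
    and least: "\<And>lam'. out_choice n E lam' \<Longrightarrow> card (unreached n E lam) \<le> card (unreached n E lam')"
    using ex_has_least_nat[of "out_choice n E", OF init, where m = "\<lambda>lam. card (unreached n E lam)"]
    by blast
  have "unreached n E lam = {}"
  proof (rule ccontr)
    assume "unreached n E lam \<noteq> {}"
    then obtain u0 where u0: "u0 \<in> unreached n E lam" by blast
    show False
    proof (cases "\<exists>u x. u \<in> unreached n E lam \<and> (u, x) \<in> arcs E \<and> x \<noteq> lam u")
      case True
      then obtain u x where ux: "u \<in> unreached n E lam" "(u, x) \<in> arcs E" "x \<noteq> lam u" by blast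
      have "out_choice n E (lam(u := x))" using oc ux(2) unfolding out_choice_def arcs_iff by auto
      moreover have "card (unreached n E (lam(u := x))) < card (unreached n E lam)"
        by (rule psubset_card_mono[OF finite_unreached redirect_choice_shrinks_unreached[OF sd oc ux]])
      ultimately show False using least by fastforce
    next
      case False
      then show False using closed_unreached_signed_cycle[OF sd conn u0] not_cycle by blast
    qed
  qed
  then show thesis using that oc unfolding unreached_def by blast
qed

section \<open>A nilpotent system from a choice reaching all vertices\<close>

lemma UNIV_sign: "UNIV = {Pos, Neg}"
  using sign.exhaust by auto

lemma card_arc_signs:
  "card {s. (u, w, s) \<in> E} = of_bool ((u, w, Pos) \<in> E) + of_bool ((u, w, Neg) \<in> E)"
proof -
  have "card {s. (u, w, s) \<in> E} = card ({Pos, Neg} \<inter> {s. (u, w, s) \<in> E})"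
    by (simp add: UNIV_sign[symmetric])
  also have "\<dots> = (\<Sum>s\<in>{Pos, Neg}. of_bool ((u, w, s) \<in> E))"
    by (subst sum_of_bool_eq) auto
  finally show ?thesis by simp
qed

lemma out_degree_eq_sum:
  assumes sd: "signed_digraph n E"
  shows "out_degree E u = (\<Sum>w<n. card {s. (u, w, s) \<in> E})"
proof -
  have "{w. (u, w, s) \<in> E} = {..<n} \<inter> {w. (u, w, s) \<in> E}" for s
    using signed_digraph_arcD[OF sd] by blast
  then show ?thesis
    unfolding out_degree_def card_arc_signs sum.distrib
    by (metis finite_lessThan of_nat_id sum_of_bool_eq)
qed

lemma in_degree_pos: "finite {w. (w, v, s) \<in> E} \<Longrightarrow> (u, v, s) \<in> E \<Longrightarrow> 0 < in_degree E v"
  unfolding in_degree_def in_pos_def in_neg_def by (cases s) (auto simp: card_gt_0_iff)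

locale reaching_choice =
  fixes n :: nat and E :: "(nat \<times> nat \<times> sign) set" and lam :: "nat \<Rightarrow> nat"
  assumes signed_digraph: "signed_digraph n E"
    and out_choice: "out_choice n E lam"
    and all_reached: "\<And>v. v < n \<Longrightarrow> reached n E lam v"
begin

definition rank :: "nat \<Rightarrow> nat" where
  "rank v = (LEAST k. v \<in> layer n E lam k)"

definition parent :: "nat \<Rightarrow> nat" where
  "parent v = (SOME u. u \<in> layer n E lam (rank v - 1) \<and> (u, v) \<in> arcs E)"

text \<open>After one step the literal of an arc from u to v with lam u \<noteq> v is constant: false if
  the arc is positive, true if negative. The gate type of a root is chosen so that these constants,
  or a pair of parallel in-arcs, decide its gate; that of a non-root so that the literal of its
  parent arc alone decides it, this literal being true in the limit iff the gate is disjunctive.\<close>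

definition root_disjunctive :: "nat \<Rightarrow> bool" where
  "root_disjunctive v \<longleftrightarrow> (\<exists>u. (u, v, Neg) \<in> E \<and> lam u \<noteq> v) \<and>
     \<not> (\<exists>u. (u, v, Pos) \<in> E \<and> lam u \<noteq> v) \<and> \<not> (\<exists>u. parallel_arcs E u v)"

primrec disjunctive_upto :: "nat \<Rightarrow> nat \<Rightarrow> bool" where
  "disjunctive_upto 0 v = root_disjunctive v"
| "disjunctive_upto (Suc k) v =
     (if rank v = Suc k then disjunctive_upto k (parent v) = ((parent v, v, Pos) \<in> E)
      else disjunctive_upto k v)"

definition disjunctive :: "nat \<Rightarrow> bool" where
  "disjunctive v = disjunctive_upto (rank v) v"

text \<open>The thresholds of the out-arcs of u lie in {1..out_degree E u}: the arcs to lam u get the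
  lowest ones, all others lie above gate_value u, the largest value u takes after one step. The
  two thresholds of parallel arcs differ, in an order depending on the gate type of the target.\<close>

definition gate_value :: "nat \<Rightarrow> nat" where
  "gate_value u = (if parallel_arcs E u (lam u) then 2 else 1)"

definition dom_max :: "nat \<Rightarrow> nat" where
  "dom_max u = (if out_degree E u = 0 then (if in_degree E u = 0 then 0 else 1) else out_degree E u)"

definition offset :: "nat \<Rightarrow> nat \<Rightarrow> sign \<Rightarrow> nat" where
  "offset u v s =
     (if parallel_arcs E u v then (if (s = Pos) = (\<not> disjunctive v) then 1 else 2) else 1)"

definition threshold :: "nat \<Rightarrow> nat \<Rightarrow> sign \<Rightarrow> nat" where
  "threshold u v s = (if v = lam u then 0 else gate_value u) + offset u v s"

definition lit :: "int \<Rightarrow> nat \<Rightarrow> nat \<Rightarrow> sign \<Rightarrow> bool" where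
  "lit k u v s \<longleftrightarrow> (int (threshold u v s) \<le> k) = (s = Pos)"

definition gate :: "(nat \<Rightarrow> int) \<Rightarrow> nat \<Rightarrow> bool" where
  "gate x v \<longleftrightarrow> (if disjunctive v then \<exists>u s. (u, v, s) \<in> E \<and> lit (x u) u v s
                  else \<forall>u s. (u, v, s) \<in> E \<longrightarrow> lit (x u) u v s)"

definition F :: "(nat \<Rightarrow> int) \<Rightarrow> nat \<Rightarrow> int" where
  "F x v = (if v < n \<and> (\<exists>u s. (u, v, s) \<in> E) \<and> gate x v then int (gate_value v) else 0)"

definition upper :: "nat \<Rightarrow> int" where
  "upper u = int (dom_max u)"

definition limit :: "nat \<Rightarrow> int" where
  "limit v = (if v < n \<and> disjunctive v then int (gate_value v) else 0)"

lemma arcD: "(u, v, s) \<in> E \<Longrightarrow> u < n \<and> v < n"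
  using signed_digraph signed_digraph_arcD by blast

lemma arc_to_choice: "(u, v, s) \<in> E \<Longrightarrow> \<exists>s'. (u, lam u, s') \<in> E"
  using out_choice arcD unfolding out_choice_def by blast

lemma gate_value_le_signs:
  assumes "(u, v, s) \<in> E"
  shows "gate_value u \<le> card {s. (u, lam u, s) \<in> E}"
proof -
  obtain s' where "(u, lam u, s') \<in> E" using arc_to_choice[OF assms] by blast
  then show ?thesis unfolding gate_value_def card_arc_signs parallel_arcs_def by (cases s') auto
qed

lemma offset_le_signs: "(u, v, s) \<in> E \<Longrightarrow> offset u v s \<le> card {s. (u, v, s) \<in> E}"
  unfolding offset_def card_arc_signs parallel_arcs_def by (cases s) auto

lemma threshold_bounds:
  assumes arc: "(u, v, s) \<in> E"
  shows "1 \<le> threshold u v s" and "threshold u v s \<le> out_degree E u"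
proof -
  show "1 \<le> threshold u v s" unfolding threshold_def offset_def by auto
  let ?m = "\<lambda>w. card {s. (u, w, s) \<in> E}"
  obtain s' where "(u, lam u, s') \<in> E" using arc_to_choice[OF arc] by blast
  then have sub: "{lam u, v} \<subseteq> {..<n}" using arcD arc by auto
  have "threshold u v s \<le> (\<Sum>w\<in>{lam u, v}. ?m w)"
    using gate_value_le_signs[OF arc] offset_le_signs[OF arc]
    by (cases "v = lam u") (auto simp: threshold_def)
  also have "\<dots> \<le> (\<Sum>w<n. ?m w)" using sub by (intro sum_mono2) auto
  finally show "threshold u v s \<le> out_degree E u"
    using out_degree_eq_sum[OF signed_digraph] by simp
qed

lemma gate_value_le_dom_max:
  assumes arc: "(w, v, s) \<in> E"
  shows "gate_value v \<le> dom_max v"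
proof (cases "parallel_arcs E v (lam v)")
  case True
  then have neq: "threshold v (lam v) Pos \<noteq> threshold v (lam v) Neg"
    unfolding threshold_def offset_def by auto
  have "(v, lam v, s) \<in> E" for s using True unfolding parallel_arcs_def by (cases s) auto
  then have bounds: "1 \<le> threshold v (lam v) s \<and> threshold v (lam v) s \<le> out_degree E v" for s
    using threshold_bounds by blast
  have "2 \<le> out_degree E v" using bounds[of Pos] bounds[of Neg] neq by linarith
  then show ?thesis using True unfolding gate_value_def dom_max_def by simp
next
  case False
  have "finite {w. (w, v, s) \<in> E}" using arcD by (auto intro: finite_subset[of _ "{..<n}"])
  then have "0 < in_degree E v" using arc by (rule in_degree_pos)
  with False show ?thesis unfolding gate_value_def dom_max_def by simp
qed

lemma F_in_states: "F x \<in> states n (\<lambda>_. 0) upper"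
  using gate_value_le_dom_max unfolding states_def upper_def F_def by fastforce

lemma is_FDS_F: "is_FDS n (\<lambda>_. 0) upper F"
  unfolding is_FDS_def using F_in_states by (simp add: upper_def)

lemma degree_bounded_F:
  assumes "interaction_graph n (\<lambda>_. 0) upper F = E"
  shows "degree_bounded n (\<lambda>_. 0) upper F"
  unfolding degree_bounded_def Let_def assms upper_def dom_max_def by auto

lemma lit_mono_Pos: "lit k u v Pos \<Longrightarrow> lit (k + 1) u v Pos"
  unfolding lit_def by auto

lemma lit_antimono_Neg: "lit (k + 1) u v Neg \<Longrightarrow> lit k u v Neg"
  unfolding lit_def by auto

lemma F_mono:
  assumes "\<And>w s. (w, v, s) \<in> E \<Longrightarrow> lit (x w) w v s \<Longrightarrow> lit (y w) w v s"
  shows "F x v \<le> F y v"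
  using assms unfolding F_def gate_def by (auto split: if_splits)

lemma interaction_graph_F_subset: "interaction_graph n (\<lambda>_. 0) upper F \<subseteq> E"
proof (rule subsetI, rule ccontr)
  fix a assume a: "a \<in> interaction_graph n (\<lambda>_. 0) upper F" and not_arc: "a \<notin> E"
  obtain u v s where uvs: "a = (u, v, s)" by (cases a)
  with a obtain x where "sign_of (F (x(u := x u + 1)) v - F x v) = Some s"
    unfolding interaction_graph_def by blast
  moreover have "F (x(u := x u + 1)) v \<le> F x v" if "s = Pos"
  proof (rule F_mono)
    fix w s' assume "(w, v, s') \<in> E" "lit ((x(u := x u + 1)) w) w v s'"
    then show "lit (x w) w v s'"
      using not_arc uvs that lit_antimono_Neg by (cases "w = u"; cases s') auto
  qed
  moreover have "F x v \<le> F (x(u := x u + 1)) v" if "s = Neg"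
  proof (rule F_mono)
    fix w s' assume "(w, v, s') \<in> E" "lit (x w) w v s'"
    then show "lit ((x(u := x u + 1)) w) w v s'"
      using not_arc uvs that lit_mono_Pos by (cases "w = u"; cases s') auto
  qed
  ultimately show False by (cases s) (auto simp: sign_of_def split: if_splits)
qed

lemma neutral_value_exists:
  assumes w: "w < n"
  obtains k where "0 \<le> k" "k \<le> upper w" "\<And>s. (w, v, s) \<in> E \<Longrightarrow> lit k w v s = (\<not> disjunctive v)"
proof (cases "parallel_arcs E w v")
  case True
  define s0 where "s0 = (if disjunctive v then Neg else Pos)"
  have "(w, v, s0) \<in> E" using True unfolding parallel_arcs_def s0_def by auto
  then have "threshold w v s0 \<le> dom_max w"
    using threshold_bounds arcD unfolding dom_max_def by fastforce
  moreover have "lit (int (threshold w v s0)) w v s = (\<not> disjunctive v)" for s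
    using True unfolding lit_def threshold_def offset_def s0_def by (cases s) auto
  ultimately show thesis by (intro that[of "int (threshold w v s0)"]) (auto simp: upper_def)
next
  case False
  show thesis
  proof (cases "\<exists>s. (w, v, s) \<in> E")
    case True
    then obtain s0 where s0: "(w, v, s0) \<in> E" by blast
    with False have only: "s = s0" if "(w, v, s) \<in> E" for s
      using that unfolding parallel_arcs_def by (cases s; cases s0) auto
    have "1 \<le> threshold w v s0" "threshold w v s0 \<le> dom_max w"
      using threshold_bounds[OF s0] arcD[OF s0] unfolding dom_max_def by auto
    then show thesis
      by (intro that[of "if (s0 = Pos) = (\<not> disjunctive v) then upper w else 0"])
        (auto simp: upper_def lit_def dest: only)
  qed (auto intro: that[of 0] simp: upper_def)
qed

lemma neutral_state_exists:
  obtains g where "g \<in> states n (\<lambda>_. 0) upper"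
    "\<And>w s. (w, v, s) \<in> E \<Longrightarrow> lit (g w) w v s = (\<not> disjunctive v)"
proof -
  have "\<exists>k. 0 \<le> k \<and> k \<le> upper w \<and> (\<forall>s. (w, v, s) \<in> E \<longrightarrow> lit k w v s = (\<not> disjunctive v))"
    if "w < n" for w
    using neutral_value_exists[OF that, where v = v] by blast
  then obtain g where g: "\<And>w. w < n \<Longrightarrow> 0 \<le> g w \<and> g w \<le> upper w \<and>
      (\<forall>s. (w, v, s) \<in> E \<longrightarrow> lit (g w) w v s = (\<not> disjunctive v))"
    by metis
  show thesis
  proof (rule that[of "\<lambda>w. if w < n then g w else 0"])
    show "(\<lambda>w. if w < n then g w else 0) \<in> states n (\<lambda>_. 0) upper"
      using g unfolding states_def by auto
    show "lit (if w < n then g w else 0) w v s = (\<not> disjunctive v)" if "(w, v, s) \<in> E" for w s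
      using g arcD[OF that] that by simp
  qed
qed

lemma gate_eq_lit:
  assumes arc: "(u, v, s) \<in> E"
    and neutral: "\<And>w s'. (w, v, s') \<in> E \<Longrightarrow> (w, s') \<noteq> (u, s) \<Longrightarrow> lit (y w) w v s' = (\<not> disjunctive v)"
  shows "gate y v = lit (y u) u v s"
  using assms unfolding gate_def by (cases "disjunctive v") (simp_all, blast+)

text \<open>An arc is witnessed by moving its source across the threshold of the arc while all other
  inputs of the target hold neutral values.\<close>

lemma interaction_graph_F_supset: "E \<subseteq> interaction_graph n (\<lambda>_. 0) upper F"
proof (rule subsetI)
  fix a assume "a \<in> E"
  then obtain u v s where uvs: "a = (u, v, s)" and arc: "(u, v, s) \<in> E" by (cases a) auto
  have u: "u < n" and v: "v < n" using arcD[OF arc] by auto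
  obtain g where g: "g \<in> states n (\<lambda>_. 0) upper"
    and g_neutral: "\<And>w s'. (w, v, s') \<in> E \<Longrightarrow> lit (g w) w v s' = (\<not> disjunctive v)"
    using neutral_state_exists by blast
  have th: "1 \<le> threshold u v s" "threshold u v s \<le> dom_max u"
    using threshold_bounds[OF arc] out_degree_eq_sum unfolding dom_max_def by auto
  define x where "x = g(u := int (threshold u v s) - 1)"
  define x' where "x' = x(u := x u + 1)"
  have x: "x \<in> states n (\<lambda>_. 0) upper" "x u < upper u"
    using g th u unfolding x_def upper_def by (auto intro: states_fun_upd)
  have x'_u: "x' u = int (threshold u v s)" unfolding x'_def x_def by simp
  have neutral: "lit (y w) w v s' = (\<not> disjunctive v)"
    if "y = x \<or> y = x'" "(w, v, s') \<in> E" "(w, s') \<noteq> (u, s)" for y w s'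
  proof (cases "w = u")
    case True
    then have "parallel_arcs E u v" "s' \<noteq> s"
      using that arc unfolding parallel_arcs_def by (cases s; cases s'; auto)+
    with True that(1) show ?thesis
      using x'_u unfolding x_def lit_def threshold_def offset_def by (cases s; cases s') auto
  next
    case False
    then have "y w = g w" using that(1) unfolding x'_def x_def by auto
    then show ?thesis using g_neutral that(2) by simp
  qed
  have "gate x v = lit (x u) u v s" "gate x' v = lit (x' u) u v s"
    by (rule gate_eq_lit[OF arc], rule neutral; simp)+
  moreover have "lit (x u) u v s = (s = Neg)" "lit (x' u) u v s = (s = Pos)"
    using x'_u unfolding lit_def x_def by (cases s; simp)+
  ultimately have "gate x v = (s = Neg)" "gate x' v = (s = Pos)" by simp_all
  then have "sign_of (F x' v - F x v) = Some s"
    using v arc unfolding F_def sign_of_def gate_value_def by (cases s) auto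
  then show "a \<in> interaction_graph n (\<lambda>_. 0) upper F"
    unfolding interaction_graph_def uvs x'_def using u v x by blast
qed

lemma interaction_graph_F: "interaction_graph n (\<lambda>_. 0) upper F = E"
  using interaction_graph_F_subset interaction_graph_F_supset by blast

lemma in_layer_rank: "v < n \<Longrightarrow> v \<in> layer n E lam (rank v)"
  unfolding rank_def using all_reached unfolding reached_def by (meson LeastI_ex)

lemma rank_le: "v \<in> layer n E lam k \<Longrightarrow> rank v \<le> k"
  unfolding rank_def by (rule Least_le)

lemma rank_eq_0_iff: "v < n \<Longrightarrow> rank v = 0 \<longleftrightarrow> choice_root E lam v"
  using in_layer_rank[of v] rank_le[of v 0] by auto

lemma parent:
  assumes v: "v < n" and rank: "rank v = Suc r"
  shows "(parent v, v) \<in> arcs E" and "rank (parent v) \<le> r"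
proof -
  have "v \<in> layer n E lam (Suc r)" using in_layer_rank[OF v] rank by simp
  moreover have "v \<notin> layer n E lam r" using rank_le rank by fastforce
  ultimately have "\<exists>u. u \<in> layer n E lam r \<and> (u, v) \<in> arcs E" by auto
  then have "parent v \<in> layer n E lam r \<and> (parent v, v) \<in> arcs E"
    unfolding parent_def rank by (simp add: someI_ex[where P = "\<lambda>u. u \<in> layer n E lam r \<and> (u, v) \<in> arcs E"])
  then show "(parent v, v) \<in> arcs E" and "rank (parent v) \<le> r" using rank_le by auto
qed

lemma disjunctive_upto_eq: "rank w \<le> k \<Longrightarrow> disjunctive_upto k w = disjunctive w"
  unfolding disjunctive_def by (induction k) (auto simp: le_Suc_eq)

lemma disjunctive_root: "rank v = 0 \<Longrightarrow> disjunctive v = root_disjunctive v"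
  unfolding disjunctive_def by simp

lemma disjunctive_parent:
  assumes "v < n" "rank v = Suc r"
  shows "disjunctive v = (disjunctive (parent v) = ((parent v, v, Pos) \<in> E))"
proof -
  have "disjunctive v = (disjunctive_upto r (parent v) = ((parent v, v, Pos) \<in> E))"
    unfolding disjunctive_def using assms(2) by simp
  then show ?thesis using disjunctive_upto_eq[OF parent(2)[OF assms]] by simp
qed

lemma dead_lit: "lam u \<noteq> v \<Longrightarrow> lit (F x u) u v s \<longleftrightarrow> s = Neg"
  unfolding lit_def F_def threshold_def offset_def by (cases s) auto

lemma parallel_lits_not_both:
  assumes parallel: "parallel_arcs E u v" and conj: "\<not> disjunctive v"
  shows "\<not> lit (F x u) u v Pos \<or> \<not> lit (F x u) u v Neg"
proof (cases "lam u = v")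
  case True
  have "F x u = 0 \<or> F x u = 2" using parallel True unfolding F_def gate_value_def by auto
  moreover have "threshold u v Pos = 1" "threshold u v Neg = 2"
    using parallel True conj unfolding threshold_def offset_def by auto
  ultimately show ?thesis unfolding lit_def by auto
qed (simp add: dead_lit)

lemma conjunctive_root_false_lit:
  assumes v: "v < n" and root: "choice_root E lam v" and conj: "\<not> root_disjunctive v"
    and arc: "(w, v, s) \<in> E"
  shows "\<exists>u s. (u, v, s) \<in> E \<and> \<not> lit (F x u) u v s"
proof -
  have "(\<exists>u. parallel_arcs E u v) \<or> (\<exists>u. (u, v, Pos) \<in> E \<and> lam u \<noteq> v)"
  proof (rule ccontr)
    assume neither: "\<not> ?thesis"
    then obtain u s where arc: "(u, v, s) \<in> E" and "lam u \<noteq> v"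
      using root arc unfolding choice_root_def by blast
    with neither have "(u, v, Neg) \<in> E" by (cases s) auto
    with neither \<open>lam u \<noteq> v\<close> conj show False unfolding root_disjunctive_def by blast
  qed
  moreover have "\<not> disjunctive v" using conj rank_eq_0_iff[OF v] root disjunctive_root by blast
  ultimately show ?thesis
    using parallel_lits_not_both dead_lit unfolding parallel_arcs_def by (metis sign.distinct(1))
qed

lemma F_F_root:
  assumes v: "v < n" and root: "choice_root E lam v"
  shows "F (F x) v = limit v"
proof -
  have disj: "disjunctive v = root_disjunctive v"
    using rank_eq_0_iff[OF v] root disjunctive_root by blast
  show ?thesis
  proof (cases "root_disjunctive v")
    case True
    then obtain u where arc: "(u, v, Neg) \<in> E" and "lam u \<noteq> v"
      unfolding root_disjunctive_def by blast
    then have "lit (F x u) u v Neg" by (simp add: dead_lit)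
    with arc True disj v show ?thesis unfolding F_def[of "F x"] gate_def limit_def by auto
  next
    case False
    then have "\<not> ((\<exists>u s. (u, v, s) \<in> E) \<and> gate (F x) v)"
      using conjunctive_root_false_lit[OF v root] disj unfolding gate_def by auto
    then show ?thesis using False disj by (auto simp: F_def[of "F x"] limit_def)
  qed
qed

lemma F_non_root:
  assumes v: "v < n" and rank: "rank v = Suc r" and y: "y (parent v) = limit (parent v)"
  shows "F y v = limit v"
proof -
  let ?u = "parent v"
  have non_root: "\<not> choice_root E lam v" using rank_eq_0_iff[OF v] rank by simp
  obtain s where arc: "(?u, v, s) \<in> E" using parent(1)[OF v rank] arcs_iff by blast
  have "lam ?u = v" "\<not> parallel_arcs E ?u v" using non_root arc unfolding choice_root_def by blast+
  then have "threshold ?u v s = 1" and "((?u, v, Pos) \<in> E) = (s = Pos)"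
    using arc unfolding threshold_def offset_def parallel_arcs_def by (cases s; auto)+
  moreover have "y ?u = (if disjunctive ?u then int (gate_value ?u) else 0)"
    using y arcD[OF arc] unfolding limit_def by simp
  ultimately have "lit (y ?u) ?u v s = disjunctive v"
    using disjunctive_parent[OF v rank] unfolding lit_def gate_value_def by auto
  with arc have "gate y v = disjunctive v"
    unfolding gate_def by auto
  then show ?thesis using v arc unfolding F_def limit_def by auto
qed

lemma funpow_F_settles: "v < n \<Longrightarrow> rank v \<le> k \<Longrightarrow> (F ^^ (k + 2)) x v = limit v"
proof (induction k arbitrary: v x)
  case 0
  then show ?case using F_F_root rank_eq_0_iff by (simp add: numeral_2_eq_2)
next
  case (Suc k)
  show ?case
  proof (cases "rank v \<le> k")
    case True
    then show ?thesis using Suc.IH[OF Suc.prems(1) True, of "F x"]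
      by (simp only: add_Suc funpow_Suc_right o_apply)
  next
    case False
    then have rank: "rank v = Suc k" using Suc.prems(2) by simp
    have "parent v < n" using parent(1)[OF Suc.prems(1) rank] arcD arcs_iff by blast
    then have "(F ^^ (k + 2)) x (parent v) = limit (parent v)"
      using Suc.IH parent(2)[OF Suc.prems(1) rank] by blast
    then show ?thesis using F_non_root[OF Suc.prems(1) rank] by simp
  qed
qed

lemma nilpotent_F: "nilpotent n (\<lambda>_. 0) upper F"
proof -
  define K where "K = Max (rank ` {..<n}) + 2"
  have "(F ^^ K) x v = limit v" for x v
  proof (cases "v < n")
    case True
    then show ?thesis using funpow_F_settles[of v] unfolding K_def by simp
  next
    case False
    have "(F ^^ K) x = F ((F ^^ (K - 1)) x)" unfolding K_def by simp
    then show ?thesis using False unfolding F_def limit_def by simp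
  qed
  then have "\<forall>x\<in>states n (\<lambda>_. 0) upper. (F ^^ K) x = limit" by (simp add: fun_eq_iff)
  moreover have "0 < K" unfolding K_def by simp
  ultimately show ?thesis unfolding nilpotent_def by blast
qed

end

theorem exists_nilpotent_degree_bounded:
  assumes sd: "signed_digraph n E" and conn: "connected_sd n E" and not_cycle: "\<not> signed_cycle n E"
  shows "\<exists>lo hi f. is_FDS n lo hi f \<and> interaction_graph n lo hi f = E \<and>
                  nilpotent n lo hi f \<and> degree_bounded n lo hi f"
proof -
  obtain lam where "out_choice n E lam" "\<And>v. v < n \<Longrightarrow> reached n E lam v"
    using exists_choice_reaching_all[OF sd conn not_cycle] by blast
  then interpret reaching_choice n E lam using sd by unfold_locales
  show ?thesis
    using is_FDS_F interaction_graph_F nilpotent_F degree_bounded_F[OF interaction_graph_F] by blast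
qed

theorem corollary4:
  fixes n :: nat and E :: "(nat \<times> nat \<times> sign) set"
  assumes "0 < n" and "signed_digraph n E" and "connected_sd n E"
  shows "(\<exists>lo hi f. is_FDS n lo hi f \<and> interaction_graph n lo hi f = E \<and>
                   nilpotent n lo hi f \<and> degree_bounded n lo hi f)
         \<longleftrightarrow> \<not> signed_cycle n E"
  using signed_cycle_not_nilpotent[OF assms(1)] exists_nilpotent_degree_bounded[OF assms(2,3)]
  by blast

end
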